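(* Let $N=(S,T,F,I)$ be a pure Petri net and let $x,y$ be configurations of $N$. Then $x\to_N y$ if and only if $x\le y$ and every multiset $Z$ with $x\le Z\le y$ is a configuration of $N$.
   Context: A Petri net $(S,T,F,I)$ has disjoint places $S$ and transitions $T$, $F:(S\times T\cup T\times S)\to\mathbb{N}$, initial marking $I:S\to\mathbb{N}$. It is pure if there are no $s\in S,t\in T$ with $F(s,t)>0$ and $F(t,s)>0$. For a finite multiset $U:T\to\mathbb{N}$, ${}^\bullet U(s)=\sum_t F(s,t)U(t)$ and $U^\bullet(s)=\sum_tU(t)F(t,s)$. A finite multiset $X$ of transitions is a configuration iff $M_X:=I-{}^\bullet X+X^\bullet\ge0$ pointwise. For multisets, $\le$ is pointwise. For configurations $x,y$, the step transition relation is defined by $x\to_N y$ iff $x\le y$ and ${}^\bullet(y-x)\le M_x$ (the multiset $y-x$ is enabled under $M_x$; firing it yields $M_y$). *)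

theory Defs
  imports "HOL-Library.Multiset"
begin

text \<open>A Petri net (S,T,F,I): places of type 's in the set S, transitions of type 't
 in the set T (disjoint since they live in different types).  The flow function F is
 split into its two components Fst s t = F(s,t) and Fts t s = F(t,s); I is the initial
 marking.\<close>

definition petri_net :: "'s set \<Rightarrow> 't set \<Rightarrow> ('s \<Rightarrow> 't \<Rightarrow> nat) \<Rightarrow> ('t \<Rightarrow> 's \<Rightarrow> nat) \<Rightarrow> ('s \<Rightarrow> nat) \<Rightarrow> bool" where
  "petri_net S T Fst Fts I \<longleftrightarrow>
     (\<forall>s t. (s \<notin> S \<or> t \<notin> T) \<longrightarrow> Fst s t = 0 \<and> Fts t s = 0) \<and> (\<forall>s. s \<notin> S \<longrightarrow> I s = 0)"

definition pure_net :: "'s set \<Rightarrow> 't set \<Rightarrow> ('s \<Rightarrow> 't \<Rightarrow> nat) \<Rightarrow> ('t \<Rightarrow> 's \<Rightarrow> nat) \<Rightarrow> bool" where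
  "pure_net S T Fst Fts \<longleftrightarrow> \<not> (\<exists>s\<in>S. \<exists>t\<in>T. Fst s t > 0 \<and> Fts t s > 0)"

definition preset :: "('s \<Rightarrow> 't \<Rightarrow> nat) \<Rightarrow> 't multiset \<Rightarrow> 's \<Rightarrow> nat" where
  "preset Fst U s = (\<Sum>t\<in>set_mset U. Fst s t * count U t)"

definition postset :: "('t \<Rightarrow> 's \<Rightarrow> nat) \<Rightarrow> 't multiset \<Rightarrow> 's \<Rightarrow> nat" where
  "postset Fts U s = (\<Sum>t\<in>set_mset U. count U t * Fts t s)"

definition marking :: "('s \<Rightarrow> 't \<Rightarrow> nat) \<Rightarrow> ('t \<Rightarrow> 's \<Rightarrow> nat) \<Rightarrow> ('s \<Rightarrow> nat) \<Rightarrow> 't multiset \<Rightarrow> 's \<Rightarrow> int" where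
  "marking Fst Fts I X s = int (I s) - int (preset Fst X s) + int (postset Fts X s)"

definition configuration :: "'s set \<Rightarrow> 't set \<Rightarrow> ('s \<Rightarrow> 't \<Rightarrow> nat) \<Rightarrow> ('t \<Rightarrow> 's \<Rightarrow> nat) \<Rightarrow> ('s \<Rightarrow> nat) \<Rightarrow> 't multiset \<Rightarrow> bool" where
  "configuration S T Fst Fts I X \<longleftrightarrow> set_mset X \<subseteq> T \<and> (\<forall>s\<in>S. marking Fst Fts I X s \<ge> 0)"

definition step_rel :: "'s set \<Rightarrow> 't set \<Rightarrow> ('s \<Rightarrow> 't \<Rightarrow> nat) \<Rightarrow> ('t \<Rightarrow> 's \<Rightarrow> nat) \<Rightarrow> ('s \<Rightarrow> nat) \<Rightarrow> 't multiset \<Rightarrow> 't multiset \<Rightarrow> bool" where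
  "step_rel S T Fst Fts I x y \<longleftrightarrow> configuration S T Fst Fts I x \<and> configuration S T Fst Fts I y \<and>
     x \<subseteq># y \<and> (\<forall>s\<in>S. int (preset Fst (y - x) s) \<le> marking Fst Fts I x s)"

end

theory Submission
  imports Defs
begin

text \<open>If every multiset between x and y is a configuration, then so is x + C, where C collects
  the transitions of y - x that consume from a given place s.  In a pure net these transitions
  do not produce on s, so firing C lowers the marking of s by exactly the preset of y - x
  at s; hence the marking of x at s covers that preset.  Conversely, if y - x is enabled at x,
  each intermediate Z = x + (Z - x) consumes at most what y - x consumes, so its marking stays
  nonnegative.\<close>

lemma sum_set_mset_count_mult:
  fixes f :: "'a \<Rightarrow> 'b::comm_semiring_1"
  shows "(\<Sum>t\<in>set_mset U. of_nat (count U t) * f t) = (\<Sum>t\<in>#U. f t)"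
proof (induction U)
  case (add x U)
  show ?case
  proof (cases "x \<in># U")
    case True
    have "(\<Sum>t\<in>set_mset U. of_nat (count (add_mset x U) t) * f t)
        = (\<Sum>t\<in>set_mset U. (if t = x then f t else 0) + of_nat (count U t) * f t)"
      by (intro sum.cong) (auto simp: distrib_right)
    with True add show ?thesis
      by (simp add: sum.distrib insert_absorb)
  next
    case False
    then have "(\<Sum>t\<in>set_mset U. of_nat (count (add_mset x U) t) * f t)
        = (\<Sum>t\<in>set_mset U. of_nat (count U t) * f t)"
      by (intro sum.cong) auto
    with False add show ?thesis
      by (simp add: not_in_iff)
  qed
qed simp

lemma preset_eq_sum_mset: "preset Fst U s = (\<Sum>t\<in>#U. Fst s t)"
  using sum_set_mset_count_mult[of U "Fst s"] by (simp add: preset_def mult.commute)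

lemma postset_eq_sum_mset: "postset Fts U s = (\<Sum>t\<in>#U. Fts t s)"
  using sum_set_mset_count_mult[of U "\<lambda>t. Fts t s"] by (simp add: postset_def)

lemma preset_union [simp]: "preset Fst (U + V) s = preset Fst U s + preset Fst V s"
  by (simp add: preset_eq_sum_mset)

lemma postset_union [simp]: "postset Fts (U + V) s = postset Fts U s + postset Fts V s"
  by (simp add: postset_eq_sum_mset)

lemma preset_mono: "U \<subseteq># V \<Longrightarrow> preset Fst U s \<le> preset Fst V s"
  by (metis le_add1 preset_union subset_mset.add_diff_inverse)

lemma marking_union:
  "marking Fst Fts I (x + D) s = marking Fst Fts I x s - int (preset Fst D s) + int (postset Fts D s)"
  by (simp add: marking_def)

lemma preset_filter_consumers: "preset Fst (filter_mset (\<lambda>t. 0 < Fst s t) D) s = preset Fst D s"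
proof -
  have "preset Fst (filter_mset (\<lambda>t. \<not> 0 < Fst s t) D) s = 0"
    by (simp add: preset_eq_sum_mset)
  then show ?thesis
    using preset_union[of Fst "filter_mset (\<lambda>t. 0 < Fst s t) D" _ s] multiset_partition
    by (metis add.right_neutral)
qed

lemma postset_filter_consumers_eq_0:
  assumes "pure_net S T Fst Fts" "s \<in> S" "set_mset D \<subseteq> T"
  shows "postset Fts (filter_mset (\<lambda>t. 0 < Fst s t) D) s = 0"
proof -
  have "Fts t s = 0" if "t \<in># D" "0 < Fst s t" for t
    using assms that unfolding pure_net_def by (meson not_gr0 subsetD)
  then show ?thesis
    by (simp add: postset_eq_sum_mset sum_mset.neutral)
qed

lemma marking_nonneg_if_below_enabled:
  assumes "x \<subseteq># Z" "Z \<subseteq># y" "int (preset Fst (y - x) s) \<le> marking Fst Fts I x s"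
  shows "0 \<le> marking Fst Fts I Z s"
proof -
  have "preset Fst (Z - x) s \<le> preset Fst (y - x) s"
    using assms(2) by (intro preset_mono) (simp add: subseteq_mset_def diff_le_mono)
  moreover have "marking Fst Fts I Z s
      = marking Fst Fts I x s - int (preset Fst (Z - x) s) + int (postset Fts (Z - x) s)"
    using assms(1) marking_union[of Fst Fts I x "Z - x" s] by simp
  ultimately show ?thesis
    using assms(3) by linarith
qed

lemma configuration_if_below_enabled:
  assumes "configuration S T Fst Fts I y" "x \<subseteq># Z" "Z \<subseteq># y"
    and "\<forall>s\<in>S. int (preset Fst (y - x) s) \<le> marking Fst Fts I x s"
  shows "configuration S T Fst Fts I Z"
proof -
  have "set_mset Z \<subseteq> T"
    using assms(1,3) unfolding configuration_def by (meson mset_subset_eqD subset_iff)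
  moreover have "0 \<le> marking Fst Fts I Z s" if "s \<in> S" for s
    using assms(4) that by (intro marking_nonneg_if_below_enabled[OF assms(2,3)]) simp
  ultimately show ?thesis
    unfolding configuration_def by blast
qed

lemma enabled_if_consumers_configuration:
  assumes "pure_net S T Fst Fts" "s \<in> S" "set_mset D \<subseteq> T"
    and "configuration S T Fst Fts I (x + filter_mset (\<lambda>t. 0 < Fst s t) D)"
  shows "int (preset Fst D s) \<le> marking Fst Fts I x s"
  using assms marking_union[of Fst Fts I x "filter_mset (\<lambda>t. 0 < Fst s t) D" s]
    postset_filter_consumers_eq_0[OF assms(1-3)] preset_filter_consumers[of Fst s D]
  unfolding configuration_def by force

theorem mainTheorem9:
  fixes S :: "'s set" and T :: "'t set"
    and Fst :: "'s \<Rightarrow> 't \<Rightarrow> nat" and Fts :: "'t \<Rightarrow> 's \<Rightarrow> nat" and I :: "'s \<Rightarrow> nat"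
    and x y :: "'t multiset"
  assumes "petri_net S T Fst Fts I"
    and pure: "pure_net S T Fst Fts"
    and cx: "configuration S T Fst Fts I x"
    and cy: "configuration S T Fst Fts I y"
  shows "step_rel S T Fst Fts I x y \<longleftrightarrow>
           (x \<subseteq># y \<and> (\<forall>Z. x \<subseteq># Z \<and> Z \<subseteq># y \<longrightarrow> configuration S T Fst Fts I Z))"
proof
  assume "step_rel S T Fst Fts I x y"
  then have xy: "x \<subseteq># y"
    and enabled: "\<forall>s\<in>S. int (preset Fst (y - x) s) \<le> marking Fst Fts I x s"
    by (simp_all add: step_rel_def)
  show "x \<subseteq># y \<and> (\<forall>Z. x \<subseteq># Z \<and> Z \<subseteq># y \<longrightarrow> configuration S T Fst Fts I Z)"
    using configuration_if_below_enabled[OF cy _ _ enabled] xy by blast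
next
  assume between: "x \<subseteq># y \<and> (\<forall>Z. x \<subseteq># Z \<and> Z \<subseteq># y \<longrightarrow> configuration S T Fst Fts I Z)"
  then have xy: "x \<subseteq># y" ..
  have "set_mset (y - x) \<subseteq> T"
    using cy unfolding configuration_def by (meson in_diffD subset_iff)
  moreover have "configuration S T Fst Fts I (x + filter_mset (\<lambda>t. 0 < Fst s t) (y - x))" for s
  proof -
    have "x + filter_mset (\<lambda>t. 0 < Fst s t) (y - x) \<subseteq># x + (y - x)"
      by (intro subset_mset.add_left_mono multiset_filter_subset)
    also have "x + (y - x) = y"
      using xy by (rule subset_mset.add_diff_inverse)
    finally have "x + filter_mset (\<lambda>t. 0 < Fst s t) (y - x) \<subseteq># y" .
    then show ?thesis
      using between by simp
  qed
  ultimately have enabled: "\<forall>s\<in>S. int (preset Fst (y - x) s) \<le> marking Fst Fts I x s"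
    using enabled_if_consumers_configuration[OF pure] by blast
  show "step_rel S T Fst Fts I x y"
    unfolding step_rel_def by (intro conjI cx cy xy enabled)
qed

end
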